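(* Let $l\ge 6$ be an integer, $m=l+4$, and let $R_p=L_{[n_1,\dots,n_l]}$ for some $[n_1,\dots,n_l]\in T_6$ of length $l$. Then the negative definite lattice $N=4A_1\oplus R_p$ of rank $m$ admits no isometric embedding into the lattice $I_{1,m}=\langle 1\rangle\oplus m\langle -1\rangle$.
   Context: For integers $n_j\ge2$, $L_{[n_1,\dots,n_l]}$ is the lattice with basis $e_1,\dots,e_l$ and tridiagonal Gram matrix with diagonal $-n_1,\dots,-n_l$ and entries $1$ directly above and below the diagonal. $T_6$ is the set of Hirzebruch-Jung continued fractions $[n_1,\dots,n_l]=n_1-1/(n_2-\cdots-1/n_l)$ (all $n_j\ge2$) equal to $\frac{6n^2}{6na-1}$ for some integers $n>a>0$ with $\gcd(n,a)=1$. $A_1$ is the lattice $\langle -2\rangle$; $\langle k\rangle$ is the rank one lattice with generator of square $k$. *)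

theory Defs
  imports Complex_Main
begin

fun hj_cf :: "int list \<Rightarrow> rat" where
  "hj_cf [] = 0"
| "hj_cf [n] = of_int n"
| "hj_cf (n # ns) = of_int n - 1 / hj_cf ns"

definition T6 :: "int list set" where
  "T6 = {ns. ns \<noteq> [] \<and> (\<forall>x\<in>set ns. x \<ge> 2) \<and>
          (\<exists>n a :: int. n > a \<and> a > 0 \<and> gcd n a = 1 \<and>
             hj_cf ns = of_int (6 * n^2) / of_int (6 * n * a - 1))}"

(* Gram matrix of L_[n1,...,nl] w.r.t. basis e_1..e_l (indices 0..l-1) *)
definition L_gram :: "int list \<Rightarrow> nat \<Rightarrow> nat \<Rightarrow> int" where
  "L_gram ns i j = (if i = j then - (ns ! i)
                    else if i = j + 1 \<or> j = i + 1 then 1 else 0)"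

(* Gram matrix of N = 4A_1 \<oplus> L_[ns]; indices 0..3 are the A_1 summands,
   indices 4..l+3 the basis of L_[ns] *)
definition N_gram :: "int list \<Rightarrow> nat \<Rightarrow> nat \<Rightarrow> int" where
  "N_gram ns i j = (if i < 4 \<and> j < 4 then (if i = j then -2 else 0)
                    else if 4 \<le> i \<and> 4 \<le> j then L_gram ns (i - 4) (j - 4)
                    else 0)"

definition I1m_form :: "nat \<Rightarrow> (nat \<Rightarrow> int) \<Rightarrow> (nat \<Rightarrow> int) \<Rightarrow> int" where
  "I1m_form m x y = x 0 * y 0 - (\<Sum>k = 1..m. x k * y k)"

(* An isometric embedding of the lattice with Gram matrix G (rank r) into I_{1,m}:
   images v 0, ..., v (r-1) of the basis in Z^{m+1} (coordinates 0..m), which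
   are Z-linearly independent (injectivity) and reproduce the Gram matrix. *)
definition isometric_embedding_into_I1 ::
    "nat \<Rightarrow> (nat \<Rightarrow> nat \<Rightarrow> int) \<Rightarrow> nat \<Rightarrow> (nat \<Rightarrow> nat \<Rightarrow> int) \<Rightarrow> bool" where
  "isometric_embedding_into_I1 r G m v \<longleftrightarrow>
     (\<forall>i<r. \<forall>k>m. v i k = 0) \<and>
     (\<forall>i<r. \<forall>j<r. I1m_form m (v i) (v j) = G i j) \<and>
     (\<forall>c :: nat \<Rightarrow> int. (\<forall>k\<le>m. (\<Sum>i<r. c i * v i k) = 0) \<longrightarrow> (\<forall>i<r. c i = 0))"

end

theory Submission
  imports Defs "Jordan_Normal_Form.Determinant"
begin

text \<open>
  Write p/q = [n_1, ..., n_l] = 6n^2/(6na - 1) with p = D(n_1, ..., n_l) and q = D(n_2, ..., n_l)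
  continuants, and e_1, ..., e_l for the chain basis of R_p. The combination x = \<Sum>_i D(n_(i+1), ..., n_l) e_i is
  orthogonal to the four A_1 generators and to e_2, ..., e_l, and its norm -pq has odd 3-adic
  valuation. Dividing the image of x in I_(1,m) by the largest possible power of 3 gives a
  vector z orthogonal to the images u of the other m - 1 basis vectors, with norm divisible by 3
  and some coordinate z_k prime to 3. The Gram determinant of (e_k, z, u) is (-1)^m times a
  square, while expanding it along z shows it is congruent to -z_k^2 det Gram(u) modulo 3. As
  det Gram(u) = 16 (-1)^(l-1) q and q = 2 (mod 3), some square would be 2 modulo 3.
\<close>

fun hj_continuant :: "int list \<Rightarrow> int" where
  "hj_continuant [] = 1"
| "hj_continuant [c] = c"
| "hj_continuant (c # d # cs) = c * hj_continuant (d # cs) - hj_continuant cs"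

lemma hj_continuant_tl_bounds:
  assumes "cs \<noteq> []" and "\<forall>x\<in>set cs. x \<ge> 2"
  shows "1 \<le> hj_continuant (tl cs) \<and> hj_continuant (tl cs) < hj_continuant cs"
  using assms
proof (induction cs rule: hj_continuant.induct)
  case (3 c d cs)
  then have "1 \<le> hj_continuant cs" "hj_continuant cs < hj_continuant (d # cs)" "c \<ge> 2"
    by auto
  moreover have "c * hj_continuant (d # cs) \<ge> 2 * hj_continuant (d # cs)"
    using calculation by (intro mult_right_mono) auto
  ultimately show ?case by (simp only: hj_continuant.simps list.sel) linarith
qed auto

lemma hj_cf_eq_continuant_quotient:
  assumes "cs \<noteq> []" and "\<forall>x\<in>set cs. x \<ge> 2"
  shows "hj_cf cs = of_int (hj_continuant cs) / of_int (hj_continuant (tl cs))"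
  using assms
proof (induction cs rule: hj_continuant.induct)
  case (3 c d cs)
  then have IH: "hj_cf (d # cs) = of_int (hj_continuant (d # cs)) / of_int (hj_continuant cs)"
    and "hj_continuant (d # cs) \<noteq> 0" "hj_continuant cs \<noteq> 0"
    using hj_continuant_tl_bounds[of "d # cs"] by auto
  then show ?case by (simp only: hj_cf.simps hj_continuant.simps list.sel IH) (simp add: field_simps)
qed auto

lemma coprime_hj_continuant_tl: "coprime (hj_continuant cs) (hj_continuant (tl cs))"
proof (induction cs rule: hj_continuant.induct)
  case (3 c d cs)
  have "gcd (c * hj_continuant (d # cs) - hj_continuant cs) (hj_continuant (d # cs))
      = gcd (- hj_continuant cs) (hj_continuant (d # cs))"
    by (metis diff_conv_add_uminus gcd.commute gcd_add_mult)
  with 3 show ?case by (simp add: coprime_iff_gcd_eq_1 gcd.commute)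
qed auto

lemma reduced_fraction_unique:
  fixes p q r s :: int
  assumes "coprime p q" "q > 0" "coprime r s" "s > 0"
    and "(of_int p / of_int q :: rat) = of_int r / of_int s"
  shows "p = r \<and> q = s"
proof -
  have "Rat.Fract p q = Rat.Fract r s" using assms(5) by (simp add: Fract_of_int_quotient)
  with quotient_of_unique[of "Rat.Fract p q"] have "(p, q) = (r, s)"
    using assms(1-4) by (metis fst_conv snd_conv)
  then show ?thesis by simp
qed

lemma coprime_6na_minus_1_6n_square: "coprime (6 * n * a - 1) (6 * n^2 :: int)"
proof -
  have "coprime (6 * n * a - 1) (6 * n * a)"
    by (simp add: coprime_commute)
  then have "coprime (6 * n * a - 1) (6 * n)"
    by (metis coprime_mult_right_iff)
  then show ?thesis
    by (metis coprime_mult_right_iff power2_eq_square)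
qed

lemma T6_continuants:
  assumes "ns \<in> T6"
  obtains n a :: int where "n > 0" "hj_continuant ns = 6 * n^2"
    "hj_continuant (tl ns) = 6 * n * a - 1"
proof -
  from assms obtain n a :: int where ne: "ns \<noteq> []" and ge: "\<forall>x\<in>set ns. x \<ge> 2"
    and na: "n > a" "a > 0"
    and cf: "hj_cf ns = of_int (6 * n^2) / of_int (6 * n * a - 1)"
    unfolding T6_def by auto
  have "n * a > 0" using na by simp
  then have "6 * n * a - 1 > 0" by (simp add: mult.assoc)
  moreover have "hj_continuant (tl ns) > 0"
    using hj_continuant_tl_bounds[OF ne ge] by simp
  ultimately have "hj_continuant ns = 6 * n^2 \<and> hj_continuant (tl ns) = 6 * n * a - 1"
    using cf hj_cf_eq_continuant_quotient[OF ne ge] coprime_hj_continuant_tl[of ns]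
      coprime_6na_minus_1_6n_square[of n a]
    by (intro reduced_fraction_unique) (auto simp: coprime_commute)
  moreover have "n > 0" using na by simp
  ultimately show ?thesis using that by blast
qed

lemma mat_delete_mat:
  "mat_delete (mat (Suc n) (Suc n) (\<lambda>(i, j). f i j)) p q
     = mat n n (\<lambda>(i, j). f (insert_index p i) (insert_index q j))"
  by (rule eq_matI) (auto simp: mat_delete_def insert_index_def)

lemma det_first_col_zero:
  fixes f :: "nat \<Rightarrow> nat \<Rightarrow> 'a :: comm_ring_1"
  assumes "\<And>i. 0 < i \<Longrightarrow> i \<le> n \<Longrightarrow> f i 0 = 0"
  shows "det (mat (Suc n) (Suc n) (\<lambda>(i, j). f i j))
           = f 0 0 * det (mat n n (\<lambda>(i, j). f (Suc i) (Suc j)))"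
proof -
  let ?A = "mat (Suc n) (Suc n) (\<lambda>(i, j). f i j)"
  have "det ?A = (\<Sum>i<Suc n. ?A $$ (i, 0) * cofactor ?A i 0)"
    by (rule laplace_expansion_column) auto
  also have "\<dots> = ?A $$ (0, 0) * cofactor ?A 0 0"
    using assms by (subst sum.lessThan_Suc_shift) (auto intro!: sum.neutral)
  finally show ?thesis
    by (simp add: cofactor_def mat_delete_mat insert_index_def)
qed

lemma det_first_row_zero:
  fixes f :: "nat \<Rightarrow> nat \<Rightarrow> 'a :: comm_ring_1"
  assumes "\<And>j. 0 < j \<Longrightarrow> j \<le> n \<Longrightarrow> f 0 j = 0"
  shows "det (mat (Suc n) (Suc n) (\<lambda>(i, j). f i j))
           = f 0 0 * det (mat n n (\<lambda>(i, j). f (Suc i) (Suc j)))"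
proof -
  let ?A = "mat (Suc n) (Suc n) (\<lambda>(i, j). f i j)"
  have "det ?A = (\<Sum>j<Suc n. ?A $$ (0, j) * cofactor ?A 0 j)"
    by (rule laplace_expansion_row) auto
  also have "\<dots> = ?A $$ (0, 0) * cofactor ?A 0 0"
    using assms by (subst sum.lessThan_Suc_shift) (auto intro!: sum.neutral)
  finally show ?thesis
    by (simp add: cofactor_def mat_delete_mat insert_index_def)
qed

lemma L_gram_Cons: "L_gram (c # cs) (Suc i) (Suc j) = L_gram cs i j"
  unfolding L_gram_def by auto

lemma det_L_gram:
  "det (mat (length cs) (length cs) (\<lambda>(i, j). L_gram cs i j))
     = (-1) ^ length cs * hj_continuant cs"
proof (induction cs rule: hj_continuant.induct)
  case 1
  then show ?case by (simp add: det_def)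
next
  case (2 c)
  have "det (mat (Suc 0) (Suc 0) (\<lambda>(i, j). L_gram [c] i j))
      = L_gram [c] 0 0 * det (mat 0 0 (\<lambda>(i, j). L_gram [c] (Suc i) (Suc j)))"
    by (rule det_first_col_zero) auto
  then show ?case by (simp add: L_gram_def det_def)
next
  case (3 c d cs)
  define k where "k = length cs"
  define A where "A = mat (Suc (Suc k)) (Suc (Suc k)) (\<lambda>(i, j). L_gram (c # d # cs) i j)"
  have "det A = (\<Sum>i<Suc (Suc k). A $$ (i, 0) * cofactor A i 0)"
    unfolding A_def by (rule laplace_expansion_column) auto
  also have "\<dots> = A $$ (0, 0) * cofactor A 0 0 + A $$ (1, 0) * cofactor A 1 0"
    by (simp only: sum.lessThan_Suc_shift) (simp add: A_def L_gram_def)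
  also have "cofactor A 0 0 = det (mat (Suc k) (Suc k) (\<lambda>(i, j). L_gram (d # cs) i j))"
    by (simp add: cofactor_def A_def mat_delete_mat insert_index_def L_gram_Cons
        flip: One_nat_def)
  also have "cofactor A 1 0 = - det (mat k k (\<lambda>(i, j). L_gram cs i j))"
  proof -
    have "det (mat_delete A 1 0)
        = L_gram (c # d # cs) 0 (Suc 0)
          * det (mat k k (\<lambda>(i, j). L_gram (c # d # cs) (Suc (Suc i)) (Suc (Suc j))))"
      unfolding A_def mat_delete_mat
      by (subst det_first_row_zero) (auto simp: L_gram_def insert_index_def)
    then show ?thesis unfolding L_gram_Cons by (simp add: cofactor_def L_gram_def)
  qed
  finally show ?case
    using "3.IH" by (simp add: A_def k_def L_gram_def algebra_simps)
qed

lemma det_N_gram: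
  "det (mat (length cs + 4) (length cs + 4) (\<lambda>(i, j). N_gram cs i j))
     = 16 * det (mat (length cs) (length cs) (\<lambda>(i, j). L_gram cs i j))"
proof -
  let ?k = "length cs"
  have "mat (?k + 4) (?k + 4) (\<lambda>(i, j). N_gram cs i j)
      = four_block_mat ((-2) \<cdot>\<^sub>m 1\<^sub>m 4) (0\<^sub>m 4 ?k) (0\<^sub>m ?k 4)
          (mat ?k ?k (\<lambda>(i, j). L_gram cs i j))"
    by (rule eq_matI) (auto simp: N_gram_def)
  then show ?thesis
    by (simp add: det_four_block_mat_upper_right_zero[of _ 4 _ ?k])
qed

lemma det_diag_sign:
  "det (mat (Suc m) (Suc m) (\<lambda>(i, j). if i = j then (if i = 0 then 1 else -1) else 0))
     = ((-1) ^ m :: 'a :: comm_ring_1)"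
proof -
  have "mat m m (\<lambda>(i, j). if Suc i = Suc j then (if Suc i = 0 then 1 else -1) else 0)
      = (-1 :: 'a) \<cdot>\<^sub>m 1\<^sub>m m"
    by (rule eq_matI) auto
  then show ?thesis by (subst det_first_col_zero) auto
qed

lemma I1m_form_commute: "I1m_form m x y = I1m_form m y x"
  unfolding I1m_form_def by (simp add: mult.commute)

lemma I1m_form_sum_left:
  "finite S \<Longrightarrow>
    I1m_form m (\<lambda>k. \<Sum>i\<in>S. c i * x i k) y = (\<Sum>i\<in>S. c i * I1m_form m (x i) y)"
  unfolding I1m_form_def
  by (simp add: sum_distrib_left sum_distrib_right sum_subtractf right_diff_distrib
      sum.swap[of _ S] mult.assoc)

lemma I1m_form_mult_left: "I1m_form m (\<lambda>k. c * x k) y = c * I1m_form m x y"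
  unfolding I1m_form_def by (simp add: sum_distrib_left right_diff_distrib mult.assoc)

lemma I1m_form_cong_left: "(\<And>k. k \<le> m \<Longrightarrow> x k = x' k) \<Longrightarrow> I1m_form m x y = I1m_form m x' y"
  unfolding I1m_form_def by (auto intro!: sum.cong)

lemma I1m_form_eq_signed_sum:
  "I1m_form m x y = (\<Sum>k<Suc m. x k * (if k = 0 then 1 else -1) * y k)"
  unfolding I1m_form_def
  by (subst sum.lessThan_Suc_shift) (simp add: sum.atLeast1_atMost_eq sum_negf)

lemma I1m_form_unit_left:
  assumes "k \<le> m"
  shows "I1m_form m (\<lambda>j. if j = k then 1 else 0) z = (if k = 0 then z 0 else - z k)"
proof -
  have "(\<Sum>j = 1..m. (if j = k then 1 else 0) * z j) = (\<Sum>j = 1..m. if j = k then z j else 0)"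
    by (rule sum.cong) auto
  then show ?thesis
    using assms unfolding I1m_form_def by auto
qed

definition I1m_gram :: "nat \<Rightarrow> nat \<Rightarrow> (nat \<Rightarrow> nat \<Rightarrow> int) \<Rightarrow> int mat" where
  "I1m_gram m K u = mat K K (\<lambda>(i, j). I1m_form m (u i) (u j))"

lemma det_I1m_gram_full_rank:
  "det (I1m_gram m (Suc m) w) = (-1) ^ m * det (mat (Suc m) (Suc m) (\<lambda>(i, j). w i j)) ^ 2"
proof -
  define B where "B = mat (Suc m) (Suc m) (\<lambda>(i, j). w i j)"
  define J :: "int mat" where
    "J = mat (Suc m) (Suc m) (\<lambda>(i, j). if i = j then (if i = 0 then 1 else -1) else 0)"
  have B: "B \<in> carrier_mat (Suc m) (Suc m)" and J: "J \<in> carrier_mat (Suc m) (Suc m)"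
    unfolding B_def J_def by auto
  have "I1m_gram m (Suc m) w = B * J * transpose_mat B"
  proof (rule eq_matI)
    fix i j assume "i < dim_row (B * J * transpose_mat B)" "j < dim_col (B * J * transpose_mat B)"
    then have ij: "i < Suc m" "j < Suc m" by (auto simp: B_def)
    have "(B * J) $$ (i, t) = w i t * (if t = 0 then 1 else -1)" if "t < Suc m" for t
      using ij that by (simp add: B_def J_def scalar_prod_def if_distrib cong: if_cong)
    then show "I1m_gram m (Suc m) w $$ (i, j) = (B * J * transpose_mat B) $$ (i, j)"
      using ij B J by (simp add: I1m_gram_def I1m_form_eq_signed_sum scalar_prod_def B_def
          atLeast0LessThan)
  qed (auto simp: I1m_gram_def B_def J_def)
  also have "det \<dots> = det B * det J * det B"
    using B J by (simp add: det_mult[of _ "Suc m"] det_transpose)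
  finally show ?thesis
    using det_diag_sign[of m, where 'a = int] by (simp add: B_def J_def power2_eq_square)
qed

lemma det_I1m_gram_orthogonal_expansion:
  assumes m: "m = Suc K" and k: "k \<le> m" and orth: "\<forall>i<K. I1m_form m z (u i) = 0"
  obtains y X where
    "(-1) ^ m * y ^ 2 = - (z k ^ 2) * det (I1m_gram m K u) + I1m_form m z z * X"
proof -
  define e where "e = (\<lambda>j. if j = k then 1 else (0::int))"
  define R where "R = (\<lambda>i. if i = 0 then e else if i = 1 then z else u (i - 2))"
  define G where "G = I1m_gram m (Suc m) R"
  have ez: "I1m_form m e z ^ 2 = z k ^ 2"
    using I1m_form_unit_left[OF k] unfolding e_def by simp
  have "det G = (\<Sum>j<Suc m. G $$ (1, j) * cofactor G 1 j)"
    unfolding G_def I1m_gram_def by (rule laplace_expansion_row) (auto simp: m)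
  also have "\<dots> = G $$ (1, 0) * cofactor G 1 0 + G $$ (1, 1) * cofactor G 1 1"
    unfolding m using orth
    by (simp only: sum.lessThan_Suc_shift) (auto simp: G_def I1m_gram_def R_def m intro!: sum.neutral)
  also have "cofactor G 1 0 = - I1m_form m e z * det (I1m_gram m K u)"
  proof -
    have "det (mat_delete G 1 0) = I1m_form m (R 0) (R 1)
        * det (mat K K (\<lambda>(i, j). I1m_form m (R (Suc (Suc i))) (R (Suc (Suc j)))))"
      unfolding G_def I1m_gram_def m mat_delete_mat
      by (subst det_first_col_zero)
        (use orth[unfolded m] in \<open>auto simp: R_def insert_index_def I1m_form_commute\<close>)
    then show ?thesis by (simp add: cofactor_def I1m_gram_def R_def)
  qed
  finally have "det G
      = - (I1m_form m e z ^ 2) * det (I1m_gram m K u) + I1m_form m z z * cofactor G 1 1"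
    by (simp add: G_def I1m_gram_def R_def m I1m_form_commute power2_eq_square)
  then show ?thesis
    using that det_I1m_gram_full_rank[of m R] unfolding G_def ez by metis
qed

lemma square_mod_3: "(x :: int) ^ 2 mod 3 = (if 3 dvd x then 0 else 1)"
proof -
  have sq: "x ^ 2 mod 3 = (x mod 3) * (x mod 3) mod 3"
    by (simp add: power2_eq_square mod_mult_eq)
  have "x mod 3 = 0 \<or> x mod 3 = 1 \<or> x mod 3 = 2"
    by presburger
  then show ?thesis
    by (elim disjE) (simp_all add: sq dvd_eq_mod_eq_0)
qed

lemma exists_primitive_part:
  fixes x :: "nat \<Rightarrow> int" and p :: int
  assumes "p > 1" and "k0 \<le> m" and "x k0 \<noteq> 0"
  shows "\<exists>j z. (\<forall>k\<le>m. x k = p ^ j * z k) \<and> (\<exists>k\<le>m. \<not> p dvd z k)"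
  using assms(3)
proof (induction "nat \<bar>x k0\<bar>" arbitrary: x rule: less_induct)
  case less
  show ?case
  proof (cases "\<exists>k\<le>m. \<not> p dvd x k")
    case True
    then show ?thesis by (intro exI[of _ 0] exI[of _ x]) simp
  next
    case False
    define y where "y = (\<lambda>k. x k div p)"
    have xy: "\<forall>k\<le>m. x k = p * y k"
      using False unfolding y_def by simp
    then have x_y: "x k0 = p * y k0" using assms(2) by blast
    then have "y k0 \<noteq> 0" using less.prems by simp
    moreover have "\<bar>y k0\<bar> < \<bar>x k0\<bar>"
      using x_y mult_strict_right_mono[of 1 p "\<bar>y k0\<bar>"] assms(1) calculation
      by (simp add: abs_mult)
    ultimately have "\<exists>j z. (\<forall>k\<le>m. y k = p ^ j * z k) \<and> (\<exists>k\<le>m. \<not> p dvd z k)"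
      by (intro less.hyps) auto
    then obtain j z where "\<forall>k\<le>m. y k = p ^ j * z k" "\<exists>k\<le>m. \<not> p dvd z k"
      by blast
    with xy show ?thesis by (intro exI[of _ "Suc j"] exI[of _ z]) (simp add: mult.assoc)
  qed
qed

lemma power_9_mult_neq_3_mult_square:
  fixes a b n :: int
  assumes "\<not> 3 dvd a" and "\<not> 3 dvd b"
  shows "9 ^ j * a \<noteq> 3 * n ^ 2 * b"
  using assms(1)
proof (induction j arbitrary: n)
  case 0
  then show ?case by auto
next
  case (Suc j)
  show ?case
  proof
    assume eq: "9 ^ Suc j * a = 3 * n ^ 2 * b"
    then have "n ^ 2 * b = 3 * (9 ^ j * a)" by (simp add: mult_ac)
    then have "3 dvd n ^ 2 * b" by simp
    then have "3 dvd n"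
      using assms(2) by (simp add: prime_dvd_mult_iff prime_dvd_power_iff)
    then obtain n' where "n = 3 * n'" by blast
    with eq have "9 ^ j * a = 3 * n' ^ 2 * b" by (simp add: power_mult_distrib mult_ac)
    with Suc.IH[of n'] Suc.prems show False by blast
  qed
qed

lemma det_I1m_gram_mod_3:
  assumes m: "m = Suc K" and orth: "\<forall>i<K. I1m_form m x (u i) = 0"
    and norm: "I1m_form m x x = 3 * n ^ 2 * b" and "n \<noteq> 0" and "\<not> 3 dvd b"
  obtains y where "3 dvd (-1) ^ m * y ^ 2 + det (I1m_gram m K u)"
proof -
  have "\<exists>k0\<le>m. x k0 \<noteq> 0"
  proof (rule ccontr)
    assume "\<not> ?thesis"
    then have "I1m_form m x x = I1m_form m (\<lambda>k. 0 * x k) x"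
      by (intro I1m_form_cong_left) auto
    then have "I1m_form m x x = 0"
      using I1m_form_mult_left[of m 0 x x] by simp
    with norm \<open>n \<noteq> 0\<close> \<open>\<not> 3 dvd b\<close> show False
      by auto
  qed
  then obtain k0 where "k0 \<le> m" "x k0 \<noteq> 0"
    by blast
  then obtain j z where xz: "\<forall>k\<le>m. x k = 3 ^ j * z k" and "\<exists>k\<le>m. \<not> 3 dvd z k"
    using exists_primitive_part[of 3 k0 m x] by auto
  then obtain k where k: "k \<le> m" "\<not> 3 dvd z k"
    by blast
  have scale: "I1m_form m x w = 3 ^ j * I1m_form m z w" for w
    using xz by (simp add: I1m_form_cong_left[of m x "\<lambda>k. 3 ^ j * z k"] I1m_form_mult_left)
  have orth_z: "\<forall>i<K. I1m_form m z (u i) = 0"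
    using orth by (simp add: scale)
  have "9 ^ j * I1m_form m z z = 3 * n ^ 2 * b"
  proof -
    have "(9::int) ^ j = 3 ^ j * 3 ^ j"
      by (simp flip: power_mult_distrib)
    then show ?thesis
      using norm scale[of x] scale[of z] I1m_form_commute[of m x z] by (simp add: mult.assoc)
  qed
  then obtain e where e: "I1m_form m z z = 3 * e"
    using power_9_mult_neq_3_mult_square \<open>\<not> 3 dvd b\<close> by blast
  obtain c where c: "z k ^ 2 = 3 * c + 1"
    using square_mod_3[of "z k"] k(2) by (metis div_mult_mod_eq mult.commute)
  obtain y X where "(-1) ^ m * y ^ 2 = - (z k ^ 2) * det (I1m_gram m K u) + I1m_form m z z * X"
    using det_I1m_gram_orthogonal_expansion[OF m k(1) orth_z] by blast
  then have "(-1) ^ m * y ^ 2 = - (3 * c + 1) * det (I1m_gram m K u) + 3 * e * X"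
    by (simp only: c e)
  then have "(-1) ^ m * y ^ 2 + det (I1m_gram m K u) = 3 * (e * X - c * det (I1m_gram m K u))"
    by (simp add: algebra_simps)
  then show ?thesis using that by (metis dvd_triv_left)
qed

lemma N_gram_Cons_insert_index:
  "N_gram (c # cs) (insert_index 4 i) (insert_index 4 j) = N_gram cs i j"
proof -
  have "Suc i - 4 = Suc (i - 4)" "Suc j - 4 = Suc (j - 4)" if "4 \<le> i" "4 \<le> j"
    using that by auto
  then show ?thesis
    unfolding N_gram_def insert_index_def by (auto simp: L_gram_Cons)
qed

lemma hj_continuant_drop:
  assumes "j < length ns"
  shows "hj_continuant (drop j ns) = ns ! j * hj_continuant (drop (Suc j) ns)
           - (if Suc j < length ns then hj_continuant (drop (Suc (Suc j)) ns) else 0)"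
proof -
  have "drop j ns = ns ! j # drop (Suc j) ns"
    using assms by (rule Cons_nth_drop_Suc[symmetric])
  moreover have "drop (Suc j) ns = ns ! Suc j # drop (Suc (Suc j)) ns" if "Suc j < length ns"
    using that by (rule Cons_nth_drop_Suc[symmetric])
  ultimately show ?thesis
    by (cases "Suc j < length ns") auto
qed

lemma sum_hj_continuant_drop_L_gram:
  assumes j: "j < length ns"
  shows "(\<Sum>i<length ns. hj_continuant (drop (Suc i) ns) * L_gram ns i j)
           = (if j = 0 then - hj_continuant ns else 0)"
proof -
  let ?r = "\<lambda>i. hj_continuant (drop (Suc i) ns)"
  have "(\<Sum>i<length ns. ?r i * L_gram ns i j)
      = (\<Sum>i<length ns. (if i = j then - ns ! j * ?r i else 0) + (if i = Suc j then ?r i else 0)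
                         + (if 0 < j \<and> i = j - 1 then ?r i else 0))"
    by (rule sum.cong) (auto simp: L_gram_def)
  also have "\<dots> = - ns ! j * ?r j + (if Suc j < length ns then ?r (Suc j) else 0)
                  + (if 0 < j then ?r (j - 1) else 0)"
    using j by (simp add: sum.distrib)
  also have "\<dots> = (if j = 0 then - hj_continuant ns else 0)"
    using hj_continuant_drop[OF j] hj_continuant_drop[of 0 ns] j by (cases j) auto
  finally show ?thesis .
qed

lemma exists_orthogonal_vector_N_gram:
  assumes "\<And>i j. i < length cs + 5 \<Longrightarrow> j < length cs + 5
             \<Longrightarrow> I1m_form m (v i) (v j) = N_gram (c # cs) i j"
  obtains x where "\<forall>i<length cs + 4. I1m_form m x (v (insert_index 4 i)) = 0"
    and "I1m_form m x x = - hj_continuant cs * hj_continuant (c # cs)"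
proof -
  define ns where "ns = c # cs"
  have gram: "I1m_form m (v i) (v j) = N_gram ns i j" if "i < length ns + 4" "j < length ns + 4"
    for i j
    using assms that unfolding ns_def by simp
  let ?r = "\<lambda>i. hj_continuant (drop (Suc i) ns)"
  define x where "x = (\<lambda>k. \<Sum>i<length ns. ?r i * v (4 + i) k)"
  have x_form: "I1m_form m x w = (\<Sum>i<length ns. ?r i * I1m_form m (v (4 + i)) w)" for w
    unfolding x_def by (rule I1m_form_sum_left) simp
  have x_chain: "I1m_form m x (v (4 + j)) = (if j = 0 then - hj_continuant ns else 0)"
    if "j < length ns" for j
  proof -
    have "I1m_form m x (v (4 + j)) = (\<Sum>i<length ns. ?r i * L_gram ns i j)"
      unfolding x_form using that by (intro sum.cong) (auto simp: gram N_gram_def)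
    then show ?thesis
      using sum_hj_continuant_drop_L_gram[OF that] by simp
  qed
  have x_A1: "I1m_form m x (v a) = 0" if "a < 4" for a
    unfolding x_form using that by (intro sum.neutral) (auto simp: gram N_gram_def)
  have "I1m_form m x (v (insert_index 4 i)) = 0" if "i < length cs + 4" for i
  proof (cases "i < 4")
    case True
    then show ?thesis using x_A1 by simp
  next
    case False
    then have "I1m_form m x (v (4 + (i - 3))) = 0"
      using x_chain[of "i - 3"] that by (simp add: ns_def)
    moreover have "insert_index 4 i = 4 + (i - 3)"
      using False by simp
    ultimately show ?thesis by metis
  qed
  moreover have "I1m_form m x x = - hj_continuant cs * hj_continuant ns"
  proof -
    have "I1m_form m x x = (\<Sum>i<length ns. ?r i * I1m_form m x (v (4 + i)))"
      unfolding x_form[of x] by (simp add: I1m_form_commute)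
    also have "\<dots> = ?r 0 * (- hj_continuant ns)"
      by (simp add: x_chain ns_def if_distrib cong: if_cong)
    finally show ?thesis by (simp add: ns_def)
  qed
  ultimately show ?thesis
    using that unfolding ns_def by blast
qed

lemma det_I1m_gram_skip_first_chain_vertex:
  assumes gram: "\<And>i j. i < length cs + 5 \<Longrightarrow> j < length cs + 5
                   \<Longrightarrow> I1m_form m (v i) (v j) = N_gram (c # cs) i j"
  shows "det (I1m_gram m (length cs + 4) (\<lambda>i. v (insert_index 4 i)))
           = 16 * (-1) ^ length cs * hj_continuant cs"
proof -
  have "I1m_form m (v (insert_index 4 i)) (v (insert_index 4 j)) = N_gram cs i j"
    if "i < length cs + 4" "j < length cs + 4" for i j
  proof -
    have "insert_index 4 i < length cs + 5" "insert_index 4 j < length cs + 5"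
      using that by (auto simp: insert_index_def)
    then have "I1m_form m (v (insert_index 4 i)) (v (insert_index 4 j))
        = N_gram (c # cs) (insert_index 4 i) (insert_index 4 j)"
      by (rule gram)
    then show ?thesis
      unfolding N_gram_Cons_insert_index .
  qed
  then have "I1m_gram m (length cs + 4) (\<lambda>i. v (insert_index 4 i))
      = mat (length cs + 4) (length cs + 4) (\<lambda>(i, j). N_gram cs i j)"
    unfolding I1m_gram_def by (intro eq_matI) auto
  then show ?thesis
    by (simp add: det_N_gram det_L_gram)
qed

lemma not_3_dvd_signed_square_plus_16:
  fixes y t :: int
  assumes "t mod 3 = 2"
  shows "\<not> 3 dvd (-1) ^ (k + 5) * y ^ 2 + 16 * (-1) ^ k * t"
proof
  assume "3 dvd (-1) ^ (k + 5) * y ^ 2 + 16 * (-1) ^ k * t"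
  moreover have "(-1) ^ (k + 5) * y ^ 2 + 16 * (-1) ^ k * t = (-1) ^ k * (16 * t - y ^ 2)"
    by (simp add: power_add algebra_simps)
  ultimately have "3 dvd (-1) ^ k * (16 * t - y ^ 2)"
    by simp
  then have "3 dvd (-1) ^ k * ((-1) ^ k * (16 * t - y ^ 2))"
    by (rule dvd_mult)
  then have "(16 * t) mod 3 = y ^ 2 mod 3"
    by (simp add: mod_eq_dvd_iff flip: mult.assoc power_mult_distrib)
  moreover have "(16 * t) mod 3 = 2"
    using assms by (simp add: mod_mult_right_eq[of 16, symmetric])
  ultimately show False
    using square_mod_3[of y] by (simp split: if_splits)
qed

theorem no_isometric_embedding_N_gram:
  assumes "ns \<noteq> []" and D: "hj_continuant ns = 3 * n ^ 2 * b"
    and "n \<noteq> 0" and "\<not> 3 dvd b" and D_tl: "hj_continuant (tl ns) mod 3 = 2"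
  shows "\<not> (\<exists>v. isometric_embedding_into_I1 (length ns + 4) (N_gram ns) (length ns + 4) v)"
proof
  obtain c cs where ns: "ns = c # cs"
    using \<open>ns \<noteq> []\<close> by (cases ns) auto
  define m where "m = length cs + 5"
  assume "\<exists>v. isometric_embedding_into_I1 (length ns + 4) (N_gram ns) (length ns + 4) v"
  then obtain v where "\<forall>i<length ns + 4. \<forall>j<length ns + 4.
                         I1m_form (length ns + 4) (v i) (v j) = N_gram ns i j"
    unfolding isometric_embedding_into_I1_def by blast
  then have gram: "\<And>i j. i < length cs + 5 \<Longrightarrow> j < length cs + 5
                     \<Longrightarrow> I1m_form m (v i) (v j) = N_gram (c # cs) i j"
    unfolding m_def ns by (simp add: add.commute)
  define u where "u = (\<lambda>i. v (insert_index 4 i))"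
  obtain x where orth: "\<forall>i<length cs + 4. I1m_form m x (u i) = 0"
    and norm: "I1m_form m x x = - hj_continuant cs * hj_continuant ns"
    using exists_orthogonal_vector_N_gram[OF gram] unfolding u_def ns by blast
  have "\<not> 3 dvd hj_continuant cs"
    using D_tl unfolding ns by (simp add: dvd_eq_mod_eq_0)
  then have b': "\<not> 3 dvd - hj_continuant cs * b"
    using \<open>\<not> 3 dvd b\<close> by (simp add: prime_dvd_mult_iff)
  have norm': "I1m_form m x x = 3 * n ^ 2 * (- hj_continuant cs * b)"
    using norm D by simp
  obtain y where "3 dvd (-1) ^ m * y ^ 2 + det (I1m_gram m (length cs + 4) u)"
    by (rule det_I1m_gram_mod_3[OF _ orth norm' \<open>n \<noteq> 0\<close> b']) (simp add: m_def)
  moreover have "det (I1m_gram m (length cs + 4) u) = 16 * (-1) ^ length cs * hj_continuant cs"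
    unfolding u_def using gram by (rule det_I1m_gram_skip_first_chain_vertex)
  ultimately show False
    using not_3_dvd_signed_square_plus_16[of "hj_continuant cs"] D_tl
    unfolding m_def ns by simp
qed

text \<open>The argument works for chains of every length.\<close>

theorem lemma6p7:
  fixes l :: nat and ns :: "int list"
  assumes "l \<ge> 6" and "length ns = l" and "ns \<in> T6"
  shows "\<not> (\<exists>v. isometric_embedding_into_I1 (l + 4) (N_gram ns) (l + 4) v)"
proof -
  obtain n a where "n > 0" "hj_continuant ns = 6 * n ^ 2"
    and D_tl: "hj_continuant (tl ns) = 6 * n * a - 1"
    using T6_continuants[OF assms(3)] by blast
  moreover have "hj_continuant (tl ns) mod 3 = 2"
  proof -
    have "6 * n * a - 1 = 2 + 3 * (2 * n * a - 1)" by simp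
    then show ?thesis unfolding D_tl by presburger
  qed
  moreover have "ns \<noteq> []"
    using assms(1,2) by auto
  ultimately show ?thesis
    using no_isometric_embedding_N_gram[of ns n 2] assms(2) by simp
qed

end
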